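(* Let $p>3$ be a prime and $k\ge1$. Then there exists an automorphism $\phi$ of the restricted wreath product $\mathbb{Z}_p\,\mathrm{wr}\,\mathbb{Z}^k$ with finite Reidemeister number $R(\phi)$. In particular, $\mathbb{Z}_p\,\mathrm{wr}\,\mathbb{Z}^k$ does not have the property $R_\infty$.
   Context: For an automorphism $\phi$ of a group $G$, $R(\phi)$ is the number of classes of the relation $g\sim hg\phi(h^{-1})$, $h,g\in G$. A group has property $R_\infty$ if $R(\phi)=\infty$ for every automorphism. $\mathbb{Z}_p\,\mathrm{wr}\,\mathbb{Z}^k=\left(\bigoplus_{x\in\mathbb{Z}^k}A_x\right)\rtimes_\alpha\mathbb{Z}^k$, with $A_x\cong\mathbb{Z}_p$ generated by $\delta_x$, finitely supported direct sum, and $\alpha(y)(\delta_x)=\delta_{y+x}$. *)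

theory Defs
  imports "HOL-Computational_Algebra.Primes" "HOL-Algebra.Group"
begin

text \<open>Z^k is represented as integer vectors \<open>nat \<Rightarrow> int\<close> vanishing outside the
  indices 0..k-1.\<close>
definition Zk :: "nat \<Rightarrow> (nat \<Rightarrow> int) set" where
  "Zk k = {y. \<forall>i\<ge>k. y i = 0}"

text \<open>Restricted wreath product Z_p wr Z^k = (finitely supported
  maps Z^k \<rightarrow> Z_p) \<rtimes> Z^k, where Z^k acts by translation:
  alpha(y)(delta_x) = delta_(y+x), i.e. (alpha(y) g)(x) = g(x - y).\<close>
definition wreath :: "nat \<Rightarrow> nat \<Rightarrow> (((nat \<Rightarrow> int) \<Rightarrow> int) \<times> (nat \<Rightarrow> int)) monoid" where
  "wreath p k = \<lparr>
     carrier = {(f, y). finite {x. f x \<noteq> 0} \<and> (\<forall>x. f x \<in> {0..<int p})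
                        \<and> (\<forall>x. f x \<noteq> 0 \<longrightarrow> x \<in> Zk k) \<and> y \<in> Zk k},
     mult = (\<lambda>(f, y) (g, z). ((\<lambda>x. (f x + g (\<lambda>i. x i - y i)) mod int p),
                             (\<lambda>i. y i + z i))),
     one = ((\<lambda>x. 0), (\<lambda>i. 0)) \<rparr>"

definition reidemeister_classes :: "('a, 'b) monoid_scheme \<Rightarrow> ('a \<Rightarrow> 'a) \<Rightarrow> 'a set set" where
  "reidemeister_classes G \<phi> =
     (\<lambda>g. {h \<otimes>\<^bsub>G\<^esub> g \<otimes>\<^bsub>G\<^esub> \<phi> (inv\<^bsub>G\<^esub> h) | h. h \<in> carrier G}) ` carrier G"

definition has_R_infty :: "('a, 'b) monoid_scheme \<Rightarrow> bool" where
  "has_R_infty G = (\<forall>\<phi>\<in>iso G G. infinite (reidemeister_classes G \<phi>))"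

end

theory Submission
  imports Defs "HOL-Number_Theory.Cong"
begin

(* The automorphism (f, y) \<mapsto> (x \<mapsto> 2 f(-x), -y) has only finitely many Reidemeister
   classes.  Twisted conjugation of (0, y0) by (u, v) yields (u - 2 u(2v + y0 - \<cdot>), 2v + y0),
   and since 1 - 2^2 = -3 is a unit modulo p > 3, the equation u - 2 u(y - \<cdot>) = a can be
   solved for u.  Hence every element (a, y) is twisted conjugate to (0, y mod 2), and
   there are at most 2^k classes. *)

section \<open>Finitely supported functions on Z^k\<close>

definition Zk_supported :: "nat \<Rightarrow> ((nat \<Rightarrow> int) \<Rightarrow> 'b::zero) \<Rightarrow> bool" where
  "Zk_supported k f \<longleftrightarrow> finite {x. f x \<noteq> 0} \<and> {x. f x \<noteq> 0} \<subseteq> Zk k"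

lemma Zk_supported_zero [simp]: "Zk_supported k (\<lambda>x. 0)"
  by (simp add: Zk_supported_def)

lemma Zk_supported_comp:
  assumes "Zk_supported k f" and "inj T" and "\<And>x. T x \<in> Zk k \<Longrightarrow> x \<in> Zk k"
  shows "Zk_supported k (\<lambda>x. f (T x))"
proof -
  have "finite (T -` {x. f x \<noteq> 0})"
    using assms(1,2) by (simp add: Zk_supported_def finite_vimageI del: vimage_Collect_eq)
  moreover have "T -` {x. f x \<noteq> 0} \<subseteq> Zk k"
    using assms(1,3) unfolding Zk_supported_def by blast
  ultimately show ?thesis
    by (simp add: Zk_supported_def)
qed

lemma Zk_supported_translate:
  assumes "Zk_supported k f" and "a \<in> Zk k"
  shows "Zk_supported k (\<lambda>x. f (\<lambda>i. x i - a i))"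
  by (rule Zk_supported_comp[OF assms(1)]) (use assms(2) in \<open>auto simp: inj_def fun_eq_iff Zk_def\<close>)

lemma Zk_supported_reflect:
  assumes "Zk_supported k f" and "a \<in> Zk k"
  shows "Zk_supported k (\<lambda>x. f (\<lambda>i. a i - x i))"
  by (rule Zk_supported_comp[OF assms(1)]) (use assms(2) in \<open>auto simp: inj_def fun_eq_iff Zk_def\<close>)

lemma Zk_supported_combine:
  assumes "Zk_supported k f" and "Zk_supported k g"
    and "\<And>x. h x \<noteq> 0 \<Longrightarrow> f x \<noteq> 0 \<or> g x \<noteq> 0"
  shows "Zk_supported k h"
proof -
  have "{x. h x \<noteq> 0} \<subseteq> {x. f x \<noteq> 0} \<union> {x. g x \<noteq> 0}"
    using assms(3) by blast
  then show ?thesis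
    using assms(1,2) unfolding Zk_supported_def by (auto intro: finite_subset)
qed

section \<open>The group structure of the wreath product\<close>

type_synonym wreath_elem = "((nat \<Rightarrow> int) \<Rightarrow> int) \<times> (nat \<Rightarrow> int)"

lemma wreath_carrier_iff:
  "(f, y) \<in> carrier (wreath p k) \<longleftrightarrow>
     Zk_supported k f \<and> (\<forall>x. f x \<in> {0..<int p}) \<and> y \<in> Zk k"
  by (auto simp: wreath_def Zk_supported_def)

lemma wreath_mult:
  "(f, y) \<otimes>\<^bsub>wreath p k\<^esub> (g, z) = ((\<lambda>x. (f x + g (\<lambda>i. x i - y i)) mod int p), (\<lambda>i. y i + z i))"
  by (simp add: wreath_def)

lemma wreath_one: "\<one>\<^bsub>wreath p k\<^esub> = ((\<lambda>x. 0), (\<lambda>i. 0))"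
  by (simp add: wreath_def)

lemma wreath_mult_closed:
  assumes "p > 0" and "(f, y) \<in> carrier (wreath p k)" and "(g, z) \<in> carrier (wreath p k)"
  shows "(f, y) \<otimes>\<^bsub>wreath p k\<^esub> (g, z) \<in> carrier (wreath p k)"
proof -
  have f: "Zk_supported k f" and g: "Zk_supported k g" and "y \<in> Zk k" "z \<in> Zk k"
    using assms by (simp_all add: wreath_carrier_iff)
  from g \<open>y \<in> Zk k\<close> have "Zk_supported k (\<lambda>x. g (\<lambda>i. x i - y i))"
    by (rule Zk_supported_translate)
  then have "Zk_supported k (\<lambda>x. (f x + g (\<lambda>i. x i - y i)) mod int p)"
    by (rule Zk_supported_combine[OF f]) auto
  with \<open>p > 0\<close> \<open>y \<in> Zk k\<close> \<open>z \<in> Zk k\<close> show ?thesis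
    by (simp add: wreath_mult wreath_carrier_iff Zk_def)
qed

definition wreath_inv :: "nat \<Rightarrow> wreath_elem \<Rightarrow> wreath_elem" where
  "wreath_inv p = (\<lambda>(f, y). ((\<lambda>x. (- f (\<lambda>i. x i + y i)) mod int p), (\<lambda>i. - y i)))"

lemma wreath_inv_closed:
  assumes "p > 0" and "(f, y) \<in> carrier (wreath p k)"
  shows "wreath_inv p (f, y) \<in> carrier (wreath p k)"
proof -
  have F: "Zk_supported k (\<lambda>x. f (\<lambda>i. x i + y i))"
    using assms Zk_supported_translate[of k f "\<lambda>i. - y i"] by (simp add: wreath_carrier_iff Zk_def)
  from F F have "Zk_supported k (\<lambda>x. (- f (\<lambda>i. x i + y i)) mod int p)"
    by (rule Zk_supported_combine) auto
  then show ?thesis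
    using assms by (simp add: wreath_inv_def wreath_carrier_iff Zk_def)
qed

lemma wreath_inv_mult:
  "wreath_inv p (f, y) \<otimes>\<^bsub>wreath p k\<^esub> (f, y) = \<one>\<^bsub>wreath p k\<^esub>"
  by (simp add: wreath_inv_def wreath_mult wreath_one fun_eq_iff mod_simps)

lemma group_wreath:
  assumes "p > 0"
  shows "group (wreath p k)"
proof (rule groupI)
  fix g h assume "g \<in> carrier (wreath p k)" "h \<in> carrier (wreath p k)"
  then show "g \<otimes>\<^bsub>wreath p k\<^esub> h \<in> carrier (wreath p k)"
    using wreath_mult_closed[OF assms] by (cases g, cases h) auto
next
  show "\<one>\<^bsub>wreath p k\<^esub> \<in> carrier (wreath p k)"
    using assms by (simp add: wreath_one wreath_carrier_iff Zk_def)
next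
  fix g h l
  show "g \<otimes>\<^bsub>wreath p k\<^esub> h \<otimes>\<^bsub>wreath p k\<^esub> l = g \<otimes>\<^bsub>wreath p k\<^esub> (h \<otimes>\<^bsub>wreath p k\<^esub> l)"
    by (cases g, cases h, cases l)
      (simp add: wreath_mult fun_eq_iff mod_simps add.assoc diff_diff_eq)
next
  fix g assume "g \<in> carrier (wreath p k)"
  then show "\<one>\<^bsub>wreath p k\<^esub> \<otimes>\<^bsub>wreath p k\<^esub> g = g"
    by (cases g) (auto simp: wreath_one wreath_mult wreath_carrier_iff fun_eq_iff)
next
  fix g assume "g \<in> carrier (wreath p k)"
  then show "\<exists>h\<in>carrier (wreath p k). h \<otimes>\<^bsub>wreath p k\<^esub> g = \<one>\<^bsub>wreath p k\<^esub>"
    using wreath_inv_closed[OF assms] wreath_inv_mult by (cases g) blast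
qed

lemma inv_wreath:
  assumes "p > 0" and "g \<in> carrier (wreath p k)"
  shows "inv\<^bsub>wreath p k\<^esub> g = wreath_inv p g"
proof -
  interpret group "wreath p k" using group_wreath[OF assms(1)] .
  show ?thesis
    using assms wreath_inv_closed wreath_inv_mult by (cases g) (simp add: inv_equality)
qed

section \<open>Reidemeister classes\<close>

definition twisted_class :: "('a, 'b) monoid_scheme \<Rightarrow> ('a \<Rightarrow> 'a) \<Rightarrow> 'a \<Rightarrow> 'a set" where
  "twisted_class G \<phi> g = {h \<otimes>\<^bsub>G\<^esub> g \<otimes>\<^bsub>G\<^esub> \<phi> (inv\<^bsub>G\<^esub> h) | h. h \<in> carrier G}"

lemma reidemeister_classes_eq: "reidemeister_classes G \<phi> = twisted_class G \<phi> ` carrier G"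
  by (simp add: reidemeister_classes_def twisted_class_def)

context group
begin

lemma twisted_class_conj_subset:
  assumes "\<phi> \<in> hom G G" and "k \<in> carrier G" and "g \<in> carrier G"
  shows "twisted_class G \<phi> (k \<otimes> g \<otimes> \<phi> (inv k)) \<subseteq> twisted_class G \<phi> g"
proof
  fix x assume "x \<in> twisted_class G \<phi> (k \<otimes> g \<otimes> \<phi> (inv k))"
  then obtain h where h: "h \<in> carrier G" and x: "x = h \<otimes> (k \<otimes> g \<otimes> \<phi> (inv k)) \<otimes> \<phi> (inv h)"
    by (auto simp: twisted_class_def)
  have "x = (h \<otimes> k) \<otimes> g \<otimes> \<phi> (inv (h \<otimes> k))"
    using assms h by (simp add: x inv_mult_group hom_mult hom_in_carrier m_assoc)
  then show "x \<in> twisted_class G \<phi> g"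
    using assms(2) h by (auto simp: twisted_class_def)
qed

lemma twisted_class_conj:
  assumes "\<phi> \<in> hom G G" and "k \<in> carrier G" and "g \<in> carrier G"
  shows "twisted_class G \<phi> (k \<otimes> g \<otimes> \<phi> (inv k)) = twisted_class G \<phi> g"
proof
  interpret \<phi>: group_hom G G \<phi>
    using assms(1) by (simp add: group_hom_def group_hom_axioms_def is_group)
  have "g = inv k \<otimes> (k \<otimes> g \<otimes> \<phi> (inv k)) \<otimes> \<phi> (inv (inv k))"
    using assms(2,3) by (simp add: \<phi>.hom_inv m_assoc[symmetric], simp add: m_assoc)
  then show "twisted_class G \<phi> g \<subseteq> twisted_class G \<phi> (k \<otimes> g \<otimes> \<phi> (inv k))"
    using assms twisted_class_conj_subset[of \<phi> "inv k" "k \<otimes> g \<otimes> \<phi> (inv k)"]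
    by (simp add: hom_in_carrier)
qed (rule twisted_class_conj_subset[OF assms])

lemma finite_reidemeister_classes:
  assumes "\<phi> \<in> hom G G" and "finite S" and "S \<subseteq> carrier G"
    and "\<And>g. g \<in> carrier G \<Longrightarrow> \<exists>k\<in>carrier G. \<exists>s\<in>S. g = k \<otimes> s \<otimes> \<phi> (inv k)"
  shows "finite (reidemeister_classes G \<phi>)"
proof -
  have "twisted_class G \<phi> g \<in> twisted_class G \<phi> ` S" if g: "g \<in> carrier G" for g
  proof -
    obtain k s where "k \<in> carrier G" "s \<in> S" and "g = k \<otimes> s \<otimes> \<phi> (inv k)"
      using assms(4)[OF g] by blast
    then have "twisted_class G \<phi> g = twisted_class G \<phi> s"
      using assms(1,3) twisted_class_conj by blast
    with \<open>s \<in> S\<close> show ?thesis by blast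
  qed
  then have "reidemeister_classes G \<phi> \<subseteq> twisted_class G \<phi> ` S"
    by (auto simp: reidemeister_classes_eq)
  then show ?thesis
    using assms(2) by (rule finite_subset[OF _ finite_imageI])
qed

end

section \<open>The automorphism\<close>

definition scale_reflect :: "nat \<Rightarrow> int \<Rightarrow> wreath_elem \<Rightarrow> wreath_elem" where
  "scale_reflect p c = (\<lambda>(f, y). ((\<lambda>x. (c * f (\<lambda>i. - x i)) mod int p), (\<lambda>i. - y i)))"

lemma scale_reflect_closed:
  assumes "p > 0" and "(f, y) \<in> carrier (wreath p k)"
  shows "scale_reflect p c (f, y) \<in> carrier (wreath p k)"
proof -
  have F: "Zk_supported k (\<lambda>x. f (\<lambda>i. 0 - x i))"
    using assms by (intro Zk_supported_reflect[of k f "\<lambda>i. 0"]) (auto simp: wreath_carrier_iff Zk_def)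
  from F F have "Zk_supported k (\<lambda>x. (c * f (\<lambda>i. - x i)) mod int p)"
    by (rule Zk_supported_combine) auto
  then show ?thesis
    using assms by (simp add: scale_reflect_def wreath_carrier_iff Zk_def)
qed

lemma scale_reflect_hom:
  assumes "p > 0"
  shows "scale_reflect p c \<in> hom (wreath p k) (wreath p k)"
proof (rule homI)
  fix g assume "g \<in> carrier (wreath p k)"
  then show "scale_reflect p c g \<in> carrier (wreath p k)"
    using scale_reflect_closed[OF assms] by (cases g) auto
next
  fix g h
  show "scale_reflect p c (g \<otimes>\<^bsub>wreath p k\<^esub> h) =
        scale_reflect p c g \<otimes>\<^bsub>wreath p k\<^esub> scale_reflect p c h"
    by (cases g, cases h) (simp add: scale_reflect_def wreath_mult fun_eq_iff mod_simps distrib_left)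
qed

lemma scale_reflect_inverse:
  assumes "(c * d) mod int p = 1" and "(f, y) \<in> carrier (wreath p k)"
  shows "scale_reflect p c (scale_reflect p d (f, y)) = (f, y)"
proof -
  have "(c * d * f x) mod int p = f x" for x
  proof -
    have "(c * d * f x) mod int p = ((c * d) mod int p * f x) mod int p"
      by (simp add: mod_mult_left_eq)
    also have "\<dots> = f x"
      using assms by (simp add: wreath_carrier_iff)
    finally show ?thesis .
  qed
  then show ?thesis
    by (simp add: scale_reflect_def fun_eq_iff mod_simps mult.assoc)
qed

lemma scale_reflect_iso:
  assumes "p > 0" and "(c * d) mod int p = 1"
  shows "scale_reflect p c \<in> iso (wreath p k) (wreath p k)"
proof -
  have "bij_betw (scale_reflect p c) (carrier (wreath p k)) (carrier (wreath p k))"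
  proof (rule bij_betw_byWitness[where f' = "scale_reflect p d"])
    show "\<forall>g\<in>carrier (wreath p k). scale_reflect p d (scale_reflect p c g) = g"
      "\<forall>g\<in>carrier (wreath p k). scale_reflect p c (scale_reflect p d g) = g"
      using assms(2) scale_reflect_inverse[of d c] scale_reflect_inverse[of c d]
      by (auto simp: mult.commute)
  qed (use scale_reflect_closed[OF assms(1)] in auto)
  then show ?thesis
    using scale_reflect_hom[OF assms(1)] by (simp add: iso_def)
qed

lemma scale_reflect_twisted_conj:
  assumes "p > 0" and "(u, v) \<in> carrier (wreath p k)"
  shows "(u, v) \<otimes>\<^bsub>wreath p k\<^esub> ((\<lambda>x. 0), y0) \<otimes>\<^bsub>wreath p k\<^esub>
           scale_reflect p c (inv\<^bsub>wreath p k\<^esub> (u, v))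
       = ((\<lambda>x. (u x - c * u (\<lambda>i. 2 * v i + y0 i - x i)) mod int p), (\<lambda>i. 2 * v i + y0 i))"
  using assms
  by (simp add: inv_wreath wreath_inv_def wreath_mult scale_reflect_def fun_eq_iff mod_simps
      algebra_simps)

lemma mod_diff_mult_mod:
  fixes a b c m :: "'a :: euclidean_ring_cancel"
  shows "(a - b * (c mod m)) mod m = (a - b * c) mod m"
  by (metis mod_diff_right_eq mod_mult_right_eq)

lemma twisted_conj_representative:
  assumes "p > 0" and "(3 * c) mod int p = 1" and "(a, y) \<in> carrier (wreath p k)"
  shows "\<exists>h\<in>carrier (wreath p k).
           (a, y) = h \<otimes>\<^bsub>wreath p k\<^esub> ((\<lambda>x. 0), (\<lambda>i. y i mod 2)) \<otimes>\<^bsub>wreath p k\<^esub>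
                    scale_reflect p 2 (inv\<^bsub>wreath p k\<^esub> h)"
proof -
  have a: "Zk_supported k a" "\<And>x. a x \<in> {0..<int p}" and "y \<in> Zk k"
    using assms(3) by (simp_all add: wreath_carrier_iff)
  define v where "v = (\<lambda>i. y i div 2)"
  define u where "u = (\<lambda>x. (- c * (a x + 2 * a (\<lambda>i. y i - x i))) mod int p)"
  from a(1) \<open>y \<in> Zk k\<close> have "Zk_supported k (\<lambda>x. a (\<lambda>i. y i - x i))"
    by (rule Zk_supported_reflect)
  then have "Zk_supported k u"
    by (rule Zk_supported_combine[OF a(1)]) (auto simp: u_def)
  then have u: "(u, v) \<in> carrier (wreath p k)"
    using \<open>p > 0\<close> \<open>y \<in> Zk k\<close> by (simp add: wreath_carrier_iff u_def v_def Zk_def)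
  have "(u x - 2 * u (\<lambda>i. y i - x i)) mod int p = a x" for x
  proof -
    have "(u x - 2 * u (\<lambda>i. y i - x i)) mod int p =
          (- c * (a x + 2 * a (\<lambda>i. y i - x i)) - 2 * (- c * (a (\<lambda>i. y i - x i) + 2 * a x))) mod int p"
      by (simp add: u_def mod_simps mod_diff_mult_mod)
    also have "\<dots> = (3 * c * a x) mod int p"
      by (rule arg_cong[where f = "\<lambda>t. t mod int p"]) algebra
    also have "\<dots> = ((3 * c) mod int p * a x) mod int p"
      by (simp add: mod_mult_left_eq)
    also have "\<dots> = a x"
      using assms(2) a(2)[of x] by simp
    finally show ?thesis .
  qed
  moreover have "(\<lambda>i. 2 * v i + y i mod 2) = y"
    by (simp add: v_def fun_eq_iff)
  ultimately have "(u, v) \<otimes>\<^bsub>wreath p k\<^esub> ((\<lambda>x. 0), (\<lambda>i. y i mod 2)) \<otimes>\<^bsub>wreath p k\<^esub>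
                     scale_reflect p 2 (inv\<^bsub>wreath p k\<^esub> (u, v)) = (a, y)"
    by (simp add: scale_reflect_twisted_conj[OF \<open>p > 0\<close> u] fun_eq_iff)
  with u show ?thesis by metis
qed

lemma finite_Zk_binary: "finite {y :: nat \<Rightarrow> int. y \<in> Zk k \<and> (\<forall>i. y i \<in> {0, 1})}"
proof -
  have "y = (\<lambda>i. if i \<in> {i. i < k \<and> y i = 1} then 1 else 0)"
    if "y \<in> Zk k" and "\<forall>i. y i \<in> {0, 1}" for y :: "nat \<Rightarrow> int"
    using that by (force simp: Zk_def fun_eq_iff not_less)
  then have "{y :: nat \<Rightarrow> int. y \<in> Zk k \<and> (\<forall>i. y i \<in> {0, 1})} \<subseteq>
             (\<lambda>s i. if i \<in> s then 1 else 0) ` Pow {..<k}"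
    by blast
  then show ?thesis
    by (rule finite_subset) simp
qed

lemma prime_gt_3_inverse_3:
  assumes "prime p" and "p > 3"
  shows "\<exists>c. (3 * c) mod int p = 1"
proof -
  have "coprime (3::int) (int p)"
    using assms by (intro primes_coprime) auto
  then obtain c where "[3 * c = 1] (mod int p)"
    using cong_solve_coprime_int by blast
  then show ?thesis
    using assms(2) by (auto simp: cong_def)
qed

lemma two_inverse_mod_odd:
  assumes "odd p" and "p > 1"
  shows "(2 * ((int p + 1) div 2)) mod int p = 1"
proof -
  from \<open>odd p\<close> obtain m where "p = 2 * m + 1"
    by (blast elim: oddE)
  then have "2 * ((int p + 1) div 2) = int p + 1"
    by simp
  moreover have "(int p + 1) mod int p = 1"
    using \<open>p > 1\<close> by (simp add: mod_add_self1)
  ultimately show ?thesis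
    by simp
qed

lemma finite_reidemeister_classes_scale_reflect_2:
  assumes "p > 0" and "(3 * c) mod int p = 1"
  shows "finite (reidemeister_classes (wreath p k) (scale_reflect p 2))"
proof -
  let ?S = "(\<lambda>y. ((\<lambda>x. 0), y)) ` {y. y \<in> Zk k \<and> (\<forall>i. y i \<in> {0, 1})}"
  show ?thesis
  proof (rule group.finite_reidemeister_classes[OF group_wreath[OF \<open>p > 0\<close>]])
    show "scale_reflect p 2 \<in> hom (wreath p k) (wreath p k)"
      using \<open>p > 0\<close> by (rule scale_reflect_hom)
    show "finite ?S" and "?S \<subseteq> carrier (wreath p k)"
      using \<open>p > 0\<close> finite_Zk_binary by (auto simp: wreath_carrier_iff)
    fix g assume "g \<in> carrier (wreath p k)"
    moreover obtain a y where g: "g = (a, y)"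
      by (cases g)
    ultimately obtain h where "h \<in> carrier (wreath p k)"
      and "g = h \<otimes>\<^bsub>wreath p k\<^esub> ((\<lambda>x. 0), (\<lambda>i. y i mod 2)) \<otimes>\<^bsub>wreath p k\<^esub>
               scale_reflect p 2 (inv\<^bsub>wreath p k\<^esub> h)"
      using twisted_conj_representative[OF assms] by blast
    moreover have "((\<lambda>x. 0), (\<lambda>i. y i mod 2)) \<in> ?S"
      using \<open>g \<in> carrier (wreath p k)\<close> by (auto simp: g wreath_carrier_iff Zk_def)
    ultimately show "\<exists>h\<in>carrier (wreath p k). \<exists>s\<in>?S.
        g = h \<otimes>\<^bsub>wreath p k\<^esub> s \<otimes>\<^bsub>wreath p k\<^esub> scale_reflect p 2 (inv\<^bsub>wreath p k\<^esub> h)"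
      by blast
  qed
qed

theorem theorem3p5:
  fixes p k :: nat
  assumes "prime p" and "p > 3" and "k \<ge> 1"
  shows "(\<exists>\<phi>\<in>iso (wreath p k) (wreath p k).
            finite (reidemeister_classes (wreath p k) \<phi>))
         \<and> \<not> has_R_infty (wreath p k)"
proof -
  have "p > 0" and "odd p"
    using assms prime_odd_nat[of p] by auto
  with \<open>p > 3\<close> have "scale_reflect p 2 \<in> iso (wreath p k) (wreath p k)"
    by (intro scale_reflect_iso[where d = "(int p + 1) div 2"] two_inverse_mod_odd) auto
  moreover obtain c where "(3 * c) mod int p = 1"
    using prime_gt_3_inverse_3[OF assms(1,2)] by blast
  with \<open>p > 0\<close> have "finite (reidemeister_classes (wreath p k) (scale_reflect p 2))"
    by (rule finite_reidemeister_classes_scale_reflect_2)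
  ultimately show ?thesis
    unfolding has_R_infty_def by blast
qed

end
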